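(* For all $P,Q\in\Gamma_n$, $$0\le M_{SA}(P\|Q)\le \tfrac13 M_{SH}(P\|Q)\qquad\text{and}\qquad 0\le \xi_{SA}(P\|Q)\le \tfrac13\xi_{SH}(P\|Q).$$
   Context: $\Gamma_n=\{P=(p_1,\dots,p_n): p_i>0,\ \sum_i p_i=1\}$, $n\ge2$. For $f:(0,\infty)\to\mathbb{R}$, $C_f(P\|Q)=\sum_{i=1}^n q_i f(p_i/q_i)$; for differentiable $f$, $E_f(P\|Q)=\sum_{i=1}^n (p_i-q_i) f'(p_i/q_i)$ and $\xi_f=E_f-C_f$. With $f_{SA}(x)=\sqrt{(x^2+1)/2}-\frac{x+1}{2}$ and $f_{SH}(x)=\sqrt{(x^2+1)/2}-\frac{2x}{x+1}$: $M_{SA}=C_{f_{SA}}=\sum_i\sqrt{(p_i^2+q_i^2)/2}-1$, $M_{SH}=C_{f_{SH}}=\sum_i\big(\sqrt{(p_i^2+q_i^2)/2}-\frac{2p_iq_i}{p_i+q_i}\big)$, $\xi_{SA}=\xi_{f_{SA}}$, $\xi_{SH}=\xi_{f_{SH}}$. *)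

theory Defs
  imports "HOL-Analysis.Analysis"
begin

definition Gamma :: "nat \<Rightarrow> (nat \<Rightarrow> real) set" where
  "Gamma n = {P. (\<forall>i<n. P i > 0) \<and> (\<Sum>i<n. P i) = 1}"

definition C_f :: "(real \<Rightarrow> real) \<Rightarrow> nat \<Rightarrow> (nat \<Rightarrow> real) \<Rightarrow> (nat \<Rightarrow> real) \<Rightarrow> real" where
  "C_f f n P Q = (\<Sum>i<n. Q i * f (P i / Q i))"

definition E_f :: "(real \<Rightarrow> real) \<Rightarrow> nat \<Rightarrow> (nat \<Rightarrow> real) \<Rightarrow> (nat \<Rightarrow> real) \<Rightarrow> real" where
  "E_f f n P Q = (\<Sum>i<n. (P i - Q i) * deriv f (P i / Q i))"

definition xi_f :: "(real \<Rightarrow> real) \<Rightarrow> nat \<Rightarrow> (nat \<Rightarrow> real) \<Rightarrow> (nat \<Rightarrow> real) \<Rightarrow> real" where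
  "xi_f f n P Q = E_f f n P Q - C_f f n P Q"

definition f_SA :: "real \<Rightarrow> real" where
  "f_SA x = sqrt ((x^2 + 1) / 2) - (x + 1) / 2"

definition f_SH :: "real \<Rightarrow> real" where
  "f_SH x = sqrt ((x^2 + 1) / 2) - 2 * x / (x + 1)"

definition M_SA where "M_SA = C_f f_SA"
definition M_SH where "M_SH = C_f f_SH"
definition xi_SA where "xi_SA = xi_f f_SA"
definition xi_SH where "xi_SH = xi_f f_SH"

end

theory Submission
  imports Defs
begin

text \<open>With \<open>s = sqrt ((x\<^sup>2 + 1) / 2)\<close>, the quadratic mean of \<open>x\<close> and \<open>1\<close>, we have
  \<open>f_SA x = s - (x + 1) / 2\<close> and \<open>(x - 1) f_SA' x - f_SA x = 1 - (x + 1) / (2 s)\<close>, both nonnegative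
  since the arithmetic mean is at most the quadratic mean. The comparisons with \<open>f_SH\<close> hold
  pointwise for \<open>x > -1\<close>: the first one squares to \<open>0 \<le> (x - 1)\<^sup>4\<close>; the second one, with
  \<open>t = (x + 1) / s\<close>, reads \<open>0 \<le> (t + 1) (t - 2)\<^sup>2 / t\<^sup>2\<close>. As \<open>\<xi>\<^sub>f\<close> is the Csiszar divergence of
  \<open>(x - 1) f'(x) - f(x)\<close>, all four inequalities are sums of pointwise ones weighted by \<open>q\<^sub>i > 0\<close>.\<close>

definition qmean :: "real \<Rightarrow> real" where
  "qmean x = sqrt ((x\<^sup>2 + 1) / 2)"

definition xi_kernel :: "(real \<Rightarrow> real) \<Rightarrow> real \<Rightarrow> real" where
  "xi_kernel f x = (x - 1) * deriv f x - f x"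

lemma C_f_mono:
  assumes "\<And>i. i < n \<Longrightarrow> P i > 0" and "\<And>i. i < n \<Longrightarrow> Q i > 0"
    and "\<And>x. x > 0 \<Longrightarrow> c * f x \<le> g x"
  shows "c * C_f f n P Q \<le> C_f g n P Q"
  unfolding C_f_def sum_distrib_left
proof (rule sum_mono)
  fix i assume "i \<in> {..<n}"
  then have "P i / Q i > 0" and "Q i > 0" using assms(1,2) by auto
  then show "c * (Q i * f (P i / Q i)) \<le> Q i * g (P i / Q i)"
    using assms(3) by (simp add: mult.left_commute)
qed

lemma C_f_nonneg:
  assumes "\<And>i. i < n \<Longrightarrow> P i > 0" and "\<And>i. i < n \<Longrightarrow> Q i > 0"
    and "\<And>x. x > 0 \<Longrightarrow> 0 \<le> f x"
  shows "0 \<le> C_f f n P Q"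
  using C_f_mono[of n P Q 0 f f] assms by simp

lemma xi_f_eq_C_f:
  assumes "\<And>i. i < n \<Longrightarrow> Q i > 0"
  shows "xi_f f n P Q = C_f (xi_kernel f) n P Q"
  unfolding xi_f_def E_f_def C_f_def xi_kernel_def sum_subtractf[symmetric]
proof (rule sum.cong)
  fix i assume "i \<in> {..<n}"
  then have "Q i > 0" using assms by simp
  then show "(P i - Q i) * deriv f (P i / Q i) - Q i * f (P i / Q i)
      = Q i * ((P i / Q i - 1) * deriv f (P i / Q i) - f (P i / Q i))"
    by (simp add: field_simps)
qed simp

lemma qmean_pos: "qmean x > 0"
  unfolding qmean_def by (simp add: add_nonneg_pos)

lemma qmean_square: "(qmean x)\<^sup>2 = (x\<^sup>2 + 1) / 2"
  unfolding qmean_def by (simp add: add_nonneg_pos)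

lemma mean_le_qmean: "(x + 1) / 2 \<le> qmean x"
proof (rule power2_le_imp_le)
  show "((x + 1) / 2)\<^sup>2 \<le> (qmean x)\<^sup>2"
    unfolding qmean_square using zero_le_power2[of "x - 1"] by (simp add: power2_eq_square field_simps)
qed (use qmean_pos in \<open>simp add: less_imp_le\<close>)

lemma qmean_has_derivative: "(qmean has_real_derivative x / (2 * qmean x)) (at x)"
proof -
  have "1 + x\<^sup>2 > 0"
    by (simp add: add_pos_nonneg)
  then show ?thesis
    unfolding qmean_def by (auto intro!: derivative_eq_intros simp: field_simps)
qed

lemma f_SA_eq: "f_SA x = qmean x - (x + 1) / 2"
  unfolding f_SA_def qmean_def ..

lemma f_SH_eq: "f_SH x = qmean x - 2 * x / (x + 1)"
  unfolding f_SH_def qmean_def ..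

lemma deriv_f_SA: "deriv f_SA x = x / (2 * qmean x) - 1 / 2"
proof (rule DERIV_imp_deriv)
  show "(f_SA has_real_derivative x / (2 * qmean x) - 1 / 2) (at x)"
    unfolding f_SA_eq[abs_def]
    by (auto intro!: derivative_eq_intros qmean_has_derivative)
qed

lemma deriv_f_SH:
  assumes "x \<noteq> -1"
  shows "deriv f_SH x = x / (2 * qmean x) - 2 / (x + 1)\<^sup>2"
proof (rule DERIV_imp_deriv)
  have "x + 1 \<noteq> 0" using assms by linarith
  then show "(f_SH has_real_derivative x / (2 * qmean x) - 2 / (x + 1)\<^sup>2) (at x)"
    unfolding f_SH_eq[abs_def]
    by (auto intro!: derivative_eq_intros qmean_has_derivative simp: field_simps power2_eq_square)
qed

lemma xi_kernel_f_SA: "xi_kernel f_SA x = 1 - (x + 1) / (2 * qmean x)"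
proof -
  have "qmean x > 0" using qmean_pos .
  then have "xi_kernel f_SA x = ((x - 1) * x - 2 * (qmean x)\<^sup>2) / (2 * qmean x) + 1"
    unfolding xi_kernel_def deriv_f_SA f_SA_eq by (simp add: field_simps power2_eq_square)
  also have "(x - 1) * x - 2 * (qmean x)\<^sup>2 = - (x + 1)"
    unfolding qmean_square by (simp add: power2_eq_square algebra_simps)
  finally show ?thesis using \<open>qmean x > 0\<close> by (simp add: field_simps)
qed

lemma xi_kernel_f_SH:
  assumes "x \<noteq> -1"
  shows "xi_kernel f_SH x = 4 * (qmean x)\<^sup>2 / (x + 1)\<^sup>2 - (x + 1) / (2 * qmean x)"
proof -
  have "qmean x > 0" using qmean_pos .
  moreover have "x + 1 \<noteq> 0" using assms by linarith
  ultimately have "xi_kernel f_SH x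
      = ((x - 1) * x - 2 * (qmean x)\<^sup>2) / (2 * qmean x) + (2 * x / (x + 1) - 2 * (x - 1) / (x + 1)\<^sup>2)"
    unfolding xi_kernel_def deriv_f_SH[OF assms] f_SH_eq by (simp add: field_simps power2_eq_square)
  also have "2 * x / (x + 1) - 2 * (x - 1) / (x + 1)\<^sup>2 = (2 * x * (x + 1) - 2 * (x - 1)) / (x + 1)\<^sup>2"
    using \<open>x + 1 \<noteq> 0\<close> by (simp add: diff_divide_distrib power2_eq_square)
  also have "(x - 1) * x - 2 * (qmean x)\<^sup>2 = - (x + 1)"
    unfolding qmean_square by (simp add: power2_eq_square algebra_simps)
  also have "2 * x * (x + 1) - 2 * (x - 1) = 4 * (qmean x)\<^sup>2"
    unfolding qmean_square by (simp add: power2_eq_square algebra_simps)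
  finally show ?thesis using \<open>qmean x > 0\<close> by (simp add: field_simps)
qed

lemma f_SA_nonneg: "0 \<le> f_SA x"
  unfolding f_SA_eq using mean_le_qmean by simp

lemma xi_kernel_f_SA_nonneg: "0 \<le> xi_kernel f_SA x"
  unfolding xi_kernel_f_SA using mean_le_qmean[of x] qmean_pos[of x] by simp

lemma three_f_SA_le_f_SH:
  assumes "x > -1"
  shows "3 * f_SA x \<le> f_SH x"
proof -
  have "4 * qmean x * (x + 1) \<le> 3 * x\<^sup>2 + 2 * x + 3"
  proof (rule power2_le_imp_le)
    have "(3 * x\<^sup>2 + 2 * x + 3)\<^sup>2 - (4 * qmean x * (x + 1))\<^sup>2 = ((x - 1)\<^sup>2)\<^sup>2"
      unfolding power_mult_distrib qmean_square by (simp add: power2_eq_square algebra_simps)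
    then show "(4 * qmean x * (x + 1))\<^sup>2 \<le> (3 * x\<^sup>2 + 2 * x + 3)\<^sup>2"
      using zero_le_power2[of "(x - 1)\<^sup>2"] by linarith
    show "0 \<le> 3 * x\<^sup>2 + 2 * x + 3"
      using assms zero_le_power2[of x] by linarith
  qed
  with assms have "0 \<le> (3 * x\<^sup>2 + 2 * x + 3 - 4 * qmean x * (x + 1)) / (2 * (x + 1))"
    by (intro divide_nonneg_pos) auto
  also have "\<dots> = f_SH x - 3 * f_SA x"
    unfolding f_SA_eq f_SH_eq using assms by (simp add: field_simps power2_eq_square)
  finally show ?thesis by simp
qed

lemma three_le_add_four_div_square:
  fixes t :: real
  assumes "t > 0"
  shows "3 \<le> t + 4 / t\<^sup>2"
proof -
  have "t + 4 / t\<^sup>2 - 3 = (t + 1) * (t - 2)\<^sup>2 / t\<^sup>2"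
    using assms by (simp add: field_simps power2_eq_square)
  also have "\<dots> \<ge> 0"
    using assms by simp
  finally show ?thesis by simp
qed

lemma three_xi_kernel_f_SA_le_f_SH:
  assumes "x > -1"
  shows "3 * xi_kernel f_SA x \<le> xi_kernel f_SH x"
proof -
  define t where "t = (x + 1) / qmean x"
  have "t > 0"
    using assms qmean_pos[of x] by (simp add: t_def)
  have "x \<noteq> -1"
    using assms by simp
  have "xi_kernel f_SH x - 3 * xi_kernel f_SA x = t + 4 / t\<^sup>2 - 3"
    unfolding xi_kernel_f_SA xi_kernel_f_SH[OF \<open>x \<noteq> -1\<close>] t_def
    using assms qmean_pos[of x] by (simp add: field_simps power2_eq_square)
  then show ?thesis
    using three_le_add_four_div_square[OF \<open>t > 0\<close>] by simp
qed

theorem proposition5p1: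
  fixes n :: nat and P Q :: "nat \<Rightarrow> real"
  assumes "n \<ge> 2" and "P \<in> Gamma n" and "Q \<in> Gamma n"
  shows "0 \<le> M_SA n P Q \<and> M_SA n P Q \<le> M_SH n P Q / 3
       \<and> 0 \<le> xi_SA n P Q \<and> xi_SA n P Q \<le> xi_SH n P Q / 3"
proof -
  have P: "\<And>i. i < n \<Longrightarrow> P i > 0" and Q: "\<And>i. i < n \<Longrightarrow> Q i > 0"
    using assms(2,3) by (auto simp: Gamma_def)
  have "0 \<le> M_SA n P Q"
    unfolding M_SA_def using P Q f_SA_nonneg by (rule C_f_nonneg)
  moreover have "3 * M_SA n P Q \<le> M_SH n P Q"
    unfolding M_SA_def M_SH_def using P Q three_f_SA_le_f_SH by (rule C_f_mono) auto
  moreover have "xi_SA n P Q = C_f (xi_kernel f_SA) n P Q" and "xi_SH n P Q = C_f (xi_kernel f_SH) n P Q"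
    unfolding xi_SA_def xi_SH_def by (rule xi_f_eq_C_f, fact Q)+
  moreover have "0 \<le> C_f (xi_kernel f_SA) n P Q"
    using P Q xi_kernel_f_SA_nonneg by (rule C_f_nonneg)
  moreover have "3 * C_f (xi_kernel f_SA) n P Q \<le> C_f (xi_kernel f_SH) n P Q"
    using P Q three_xi_kernel_f_SA_le_f_SH by (rule C_f_mono) auto
  ultimately show ?thesis by linarith
qed

end
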